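(* Let $(\lambda_k),(x_k),(y_k)$ be generated by the acceleration framework (context) up to $K$ for convex differentiable $g$ with minimizer $x^*$, $g^*=g(x^* )$, and suppose $\delta\le c\sqrt{1-\sigma}\,\|x^*\|/A_K$ for some $c\ge0$. Then $\delta_k\le c(1+3c)\|x^*\|^2$ for all $k\in[K]$, where $\delta_k=\delta\sum_{i\in[k]}a_i\|x_i-x^*\|+\frac{\delta^2}{2(1-\sigma)}\sum_{i\in[k]}a_i^2$. Consequently, if $c\le\frac14$ then for all $k\in[K]$, \[ A_k[g(y_k)-g^*]+\frac12\|x_k-x^*\|^2+\sum_{i\in[k]}\frac{(1-\sigma)A_i}{2\lambda_i}\|y_i-\tilde x_{i-1}\|^2\le\|x^*\|^2. \] In particular, if $\delta\le\frac{\|x^*\|}{\mu A_K}$ with $\mu=\frac{4\sqrt2}{\sqrt{1-\sigma}}$, then $\|x_k-x^*\|\le2\|x^*\|$ for all $k\in[K]$, and for every $\epsilon>0$ either $g(y_k)\le g^*+\epsilon$ or $A_k\le\|x^*\|^2/\epsilon$.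
   Context: Acceleration framework: let $g:\mathbb{R}^d\to\mathbb{R}$ be convex and differentiable, $\sigma\in(0,1)$, $\delta\ge0$, $K\ge1$. Sequences $(\lambda_k)_{k=1}^K\subset(0,\infty)$ and $(x_k)_{k=0}^K,(y_k)_{k=0}^K\subset\mathbb{R}^d$ are generated by the framework if $x_0=y_0=0$, $A_0=0$, and for each $k=0,\dots,K-1$, with $a_{k+1}=\frac12\big[\lambda_{k+1}+\sqrt{\lambda_{k+1}^2+4\lambda_{k+1}A_k}\big]$, $A_{k+1}=A_k+a_{k+1}$, $\tilde x_k=\frac{A_k}{A_{k+1}}y_k+\frac{a_{k+1}}{A_{k+1}}x_k$, one has $\|\lambda_{k+1}\nabla g(y_{k+1})+y_{k+1}-\tilde x_k\|\le\sigma\|y_{k+1}-\tilde x_k\|+\lambda_{k+1}\delta$ and $\|x_{k+1}-(x_k-a_{k+1}\nabla g(y_{k+1}))\|\le a_{k+1}\delta$. (Note $\lambda_{k+1}A_{k+1}=a_{k+1}^2$.) *)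

theory Defs
  imports "HOL-Analysis.Analysis"
begin

fun acc_A :: "(nat \<Rightarrow> real) \<Rightarrow> nat \<Rightarrow> real" where
  "acc_A lam 0 = 0"
| "acc_A lam (Suc k) = acc_A lam k
     + (lam (Suc k) + sqrt ((lam (Suc k))\<^sup>2 + 4 * lam (Suc k) * acc_A lam k)) / 2"

text \<open>a_k for k >= 1 (so that A_k = A_(k-1) + a_k); the value at k = 0 is irrelevant.\<close>
definition acc_a :: "(nat \<Rightarrow> real) \<Rightarrow> nat \<Rightarrow> real" where
  "acc_a lam k = (lam k + sqrt ((lam k)\<^sup>2 + 4 * lam k * acc_A lam (k - 1))) / 2"

definition acc_xt :: "(nat \<Rightarrow> real) \<Rightarrow> (nat \<Rightarrow> 'a::real_vector) \<Rightarrow> (nat \<Rightarrow> 'a) \<Rightarrow> nat \<Rightarrow> 'a" where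
  "acc_xt lam x y k = (acc_A lam k / acc_A lam (Suc k)) *\<^sub>R y k
                     + (acc_a lam (Suc k) / acc_A lam (Suc k)) *\<^sub>R x k"

definition accel_framework ::
  "('a::real_inner \<Rightarrow> 'a) \<Rightarrow> real \<Rightarrow> real \<Rightarrow> nat \<Rightarrow> (nat \<Rightarrow> real) \<Rightarrow> (nat \<Rightarrow> 'a) \<Rightarrow> (nat \<Rightarrow> 'a) \<Rightarrow> bool"
where
  "accel_framework gradg \<sigma> \<delta> K lam x y \<longleftrightarrow>
     x 0 = 0 \<and> y 0 = 0 \<and> (\<forall>k\<in>{1..K}. 0 < lam k) \<and>
     (\<forall>k<K.
        norm (lam (Suc k) *\<^sub>R gradg (y (Suc k)) + y (Suc k) - acc_xt lam x y k)
          \<le> \<sigma> * norm (y (Suc k) - acc_xt lam x y k) + lam (Suc k) * \<delta>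
      \<and> norm (x (Suc k) - (x k - acc_a lam (Suc k) *\<^sub>R gradg (y (Suc k))))
          \<le> acc_a lam (Suc k) * \<delta>)"

definition acc_err ::
  "real \<Rightarrow> real \<Rightarrow> (nat \<Rightarrow> real) \<Rightarrow> (nat \<Rightarrow> 'a::real_normed_vector) \<Rightarrow> 'a \<Rightarrow> nat \<Rightarrow> real"
where
  "acc_err \<sigma> \<delta> lam x xs k =
     \<delta> * (\<Sum>i=1..k. acc_a lam i * norm (x i - xs))
     + \<delta>\<^sup>2 / (2 * (1 - \<sigma>)) * (\<Sum>i=1..k. (acc_a lam i)\<^sup>2)"

end

theory Submission
  imports Defs
begin

(*
  With the potential
    \<Phi>\<^sub>k = A\<^sub>k (g y\<^sub>k - g x\<^sup>\<star>) + 1/2 \<parallel>x\<^sub>k - x\<^sup>\<star>\<parallel>\<^sup>2 + \<Sum>\<^sub>i\<^sub>\<le>\<^sub>k (1 - \<sigma>) A\<^sub>i / (2 \<lambda>\<^sub>i) \<parallel>y\<^sub>i - xt\<^sub>i\<^sub>-\<^sub>1\<parallel>\<^sup>2,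
  one step of the framework gives
    \<Phi>\<^sub>k\<^sub>+\<^sub>1 \<le> \<Phi>\<^sub>k + \<delta> a\<^sub>k\<^sub>+\<^sub>1 \<parallel>x\<^sub>k\<^sub>+\<^sub>1 - x\<^sup>\<star>\<parallel> + \<delta>\<^sup>2 a\<^sub>k\<^sub>+\<^sub>1\<^sup>2 / (2 (1 - \<sigma>)):
  the gradient inequality at y\<^sub>k\<^sub>+\<^sub>1, taken towards y\<^sub>k and x\<^sup>\<star> with weights A\<^sub>k and a\<^sub>k\<^sub>+\<^sub>1,
  controls the objective gap; Young's inequality turns the relative error condition of the
  proximal step into the residual term; and a\<^sub>k\<^sub>+\<^sub>1\<^sup>2 = \<lambda>\<^sub>k\<^sub>+\<^sub>1 A\<^sub>k\<^sub>+\<^sub>1 makes the two fit together.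
  Hence \<Phi>\<^sub>k \<le> 1/2 \<parallel>x\<^sup>\<star>\<parallel>\<^sup>2 + \<delta>\<^sub>k.

  As \<Sum> a\<^sub>i = A\<^sub>k \<le> A\<^sub>K, the error satisfies \<delta>\<^sub>k \<le> \<delta> A\<^sub>K M + (\<delta> A\<^sub>K)\<^sup>2 / (2 (1 - \<sigma>)), where M is
  the largest distance \<parallel>x\<^sub>i - x\<^sup>\<star>\<parallel>. The potential bound at an iterate attaining M then gives
  M\<^sup>2 \<le> (1 + c\<^sup>2) \<parallel>x\<^sup>\<star>\<parallel>\<^sup>2 + 2 c \<parallel>x\<^sup>\<star>\<parallel> M, so M \<le> (1 + 5c/2) \<parallel>x\<^sup>\<star>\<parallel> and \<delta>\<^sub>k \<le> c (1 + 3c) \<parallel>x\<^sup>\<star>\<parallel>\<^sup>2.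
  For c \<le> 1/4 this is at most 1/2 \<parallel>x\<^sup>\<star>\<parallel>\<^sup>2, so \<Phi>\<^sub>k \<le> \<parallel>x\<^sup>\<star>\<parallel>\<^sup>2, from which the remaining claims are
  read off.
*)

lemma convex_on_imp_above_tangent_inner:
  fixes g :: "'a::real_inner \<Rightarrow> real"
  assumes conv: "convex_on UNIV g" and grad: "(g has_derivative (\<lambda>h. G \<bullet> h)) (at z)"
  shows "g z + G \<bullet> (w - z) \<le> g w"
proof -
  define h where "h t = g (z + t *\<^sub>R (w - z))" for t :: real
  have "convex_on UNIV h"
  proof (rule convex_onI)
    fix t a b :: real assume "0 < t" "t < 1"
    have "z + ((1 - t) *\<^sub>R a + t *\<^sub>R b) *\<^sub>R (w - z)
        = (1 - t) *\<^sub>R (z + a *\<^sub>R (w - z)) + t *\<^sub>R (z + b *\<^sub>R (w - z))"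
      by (simp add: algebra_simps)
    with \<open>0 < t\<close> \<open>t < 1\<close> show "h ((1 - t) *\<^sub>R a + t *\<^sub>R b) \<le> (1 - t) * h a + t * h b"
      unfolding h_def using convex_onD[OF conv, of t] by simp
  qed simp
  moreover have "(h has_field_derivative G \<bullet> (w - z)) (at 0)"
  proof -
    have line: "((\<lambda>t. z + t *\<^sub>R (w - z)) has_derivative (\<lambda>t. t *\<^sub>R (w - z))) (at 0)"
      by (auto intro!: derivative_eq_intros)
    have "(g has_derivative (\<lambda>h. G \<bullet> h)) (at (z + 0 *\<^sub>R (w - z)))"
      using grad by simp
    from diff_chain_at[OF line this] have "(h has_derivative (\<lambda>t. G \<bullet> (t *\<^sub>R (w - z)))) (at 0)"
      unfolding h_def[abs_def] by (simp add: o_def)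
    then show ?thesis
      by (simp add: has_field_derivative_def mult.commute[of _ "G \<bullet> (w - z)"])
  qed
  ultimately have "G \<bullet> (w - z) * (1 - 0) \<le> h 1 - h 0"
    by (intro convex_on_imp_above_tangent) auto
  then show ?thesis unfolding h_def by simp
qed

lemma relative_error_inequality:
  fixes v d :: "'a::real_inner"
  assumes "0 \<le> \<sigma>" "\<sigma> < 1"
    and err: "norm (l *\<^sub>R v + d) \<le> \<sigma> * norm d + l * \<delta>"
  shows "l\<^sup>2 * (norm v)\<^sup>2 + 2 * l * (v \<bullet> d) \<le> (l * \<delta>)\<^sup>2 / (1 - \<sigma>) - (1 - \<sigma>) * (norm d)\<^sup>2"
proof -
  have "(norm (l *\<^sub>R v + d))\<^sup>2 = l\<^sup>2 * (norm v)\<^sup>2 + 2 * l * (v \<bullet> d) + (norm d)\<^sup>2"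
    unfolding power2_norm_eq_inner
    by (simp add: inner_add_left inner_add_right inner_commute algebra_simps power2_eq_square)
  moreover have "(norm (l *\<^sub>R v + d))\<^sup>2 \<le> (\<sigma> * norm d + l * \<delta>)\<^sup>2"
    using err by (intro power_mono) auto
  \<comment> \<open>Young's inequality for the cross term; the slack is \<open>\<sigma> (l \<delta> - (1 - \<sigma>) |d|)\<^sup>2 \<ge> 0\<close>.\<close>
  moreover have "(1 - \<sigma>) * ((\<sigma> * norm d + l * \<delta>)\<^sup>2 - (norm d)\<^sup>2 + (1 - \<sigma>) * (norm d)\<^sup>2) \<le> (l * \<delta>)\<^sup>2"
    using mult_nonneg_nonneg[OF \<open>0 \<le> \<sigma>\<close> zero_le_power2[of "l * \<delta> - (1 - \<sigma>) * norm d"]]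
    by (simp add: algebra_simps power2_eq_square)
  then have "(\<sigma> * norm d + l * \<delta>)\<^sup>2 - (norm d)\<^sup>2 + (1 - \<sigma>) * (norm d)\<^sup>2 \<le> (l * \<delta>)\<^sup>2 / (1 - \<sigma>)"
    using \<open>\<sigma> < 1\<close> by (simp add: field_simps)
  ultimately show ?thesis by linarith
qed

lemma inexact_gradient_step:
  fixes x x' v xs :: "'a::real_inner"
  assumes "norm (x' - (x - a *\<^sub>R v)) \<le> a * \<delta>"
  shows "a * (v \<bullet> (x - xs)) + 1/2 * (norm (x' - xs))\<^sup>2 - 1/2 * (norm (x - xs))\<^sup>2
      \<le> \<delta> * (a * norm (x' - xs)) + 1/2 * a\<^sup>2 * (norm v)\<^sup>2"
proof -
  define w where "w = x' - (x - a *\<^sub>R v)"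
  have "a * (v \<bullet> (x - xs)) + 1/2 * (norm (x' - xs))\<^sup>2 - 1/2 * (norm (x - xs))\<^sup>2
      = w \<bullet> (x' - xs) + 1/2 * a\<^sup>2 * (norm v)\<^sup>2 - 1/2 * (norm w)\<^sup>2"
    unfolding w_def power2_norm_eq_inner
    by (simp add: inner_add_left inner_add_right inner_diff_left inner_diff_right
        inner_commute algebra_simps power2_eq_square)
  also have "\<dots> \<le> norm w * norm (x' - xs) + 1/2 * a\<^sup>2 * (norm v)\<^sup>2"
    using norm_cauchy_schwarz[of w "x' - xs"] zero_le_power2[of "norm w"] by linarith
  also have "\<dots> \<le> \<delta> * (a * norm (x' - xs)) + 1/2 * a\<^sup>2 * (norm v)\<^sup>2"
    using mult_right_mono[OF assms[folded w_def], of "norm (x' - xs)"] by (simp add: algebra_simps)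
  finally show ?thesis .
qed

lemma accel_step_estimate:
  fixes x y x' y' v xs xt :: "'a::real_inner"
  assumes A: "0 \<le> A" and lam: "0 < l" and a: "0 < a" and a_sq: "a\<^sup>2 = l * (A + a)"
    and sigma: "0 \<le> \<sigma>" "\<sigma> < 1"
    and xt: "xt = (A / (A + a)) *\<^sub>R y + (a / (A + a)) *\<^sub>R x"
    and tangent_y: "gy' + v \<bullet> (y - y') \<le> gy" and tangent_xs: "gy' + v \<bullet> (xs - y') \<le> gs"
    and prox_err: "norm (l *\<^sub>R v + y' - xt) \<le> \<sigma> * norm (y' - xt) + l * \<delta>"
    and grad_err: "norm (x' - (x - a *\<^sub>R v)) \<le> a * \<delta>"
  shows "(A + a) * (gy' - gs) + 1/2 * (norm (x' - xs))\<^sup>2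
      + (1 - \<sigma>) * (A + a) / (2 * l) * (norm (y' - xt))\<^sup>2
    \<le> A * (gy - gs) + 1/2 * (norm (x - xs))\<^sup>2
      + \<delta> * (a * norm (x' - xs)) + \<delta>\<^sup>2 / (2 * (1 - \<sigma>)) * a\<^sup>2"
proof -
  define d where "d = y' - xt"
  have "(A + a) *\<^sub>R xt = A *\<^sub>R y + a *\<^sub>R x"
    using A a unfolding xt by (simp add: scaleR_add_right)
  then have v_xt: "(A + a) * (v \<bullet> xt) = A * (v \<bullet> y) + a * (v \<bullet> x)"
    by (metis inner_add_right inner_scaleR_right)
  have "A * (gy' + v \<bullet> (y - y')) \<le> A * gy" "a * (gy' + v \<bullet> (xs - y')) \<le> a * gs"
    using tangent_y tangent_xs A a by (auto intro: mult_left_mono)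
  with v_xt have convexity: "(A + a) * (gy' - gs)
      \<le> A * (gy - gs) + (A + a) * (v \<bullet> d) + a * (v \<bullet> (x - xs))"
    unfolding d_def by (simp add: inner_diff_right algebra_simps)
  have "(A + a) * (v \<bullet> d) + 1/2 * a\<^sup>2 * (norm v)\<^sup>2
      = (A + a) / (2 * l) * (l\<^sup>2 * (norm v)\<^sup>2 + 2 * l * (v \<bullet> d))"
    using lam a_sq by (simp add: field_simps power2_eq_square)
  also have "\<dots> \<le> (A + a) / (2 * l) * ((l * \<delta>)\<^sup>2 / (1 - \<sigma>) - (1 - \<sigma>) * (norm d)\<^sup>2)"
    using relative_error_inequality[OF sigma, of l v d \<delta>] prox_err A a lam
    unfolding d_def by (intro mult_left_mono) (auto simp: algebra_simps)
  also have "\<dots> = \<delta>\<^sup>2 / (2 * (1 - \<sigma>)) * a\<^sup>2 - (1 - \<sigma>) * (A + a) / (2 * l) * (norm d)\<^sup>2"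
    using lam a_sq sigma by (simp add: field_simps power2_eq_square)
  finally show ?thesis
    using convexity inexact_gradient_step[OF grad_err, of xs] unfolding d_def by linarith
qed

lemma acc_a_Suc:
  "acc_a lam (Suc k) = (lam (Suc k) + sqrt ((lam (Suc k))\<^sup>2 + 4 * lam (Suc k) * acc_A lam k)) / 2"
  by (simp add: acc_a_def)

lemma acc_A_Suc_eq: "acc_A lam (Suc k) = acc_A lam k + acc_a lam (Suc k)"
  by (simp add: acc_a_def)

declare acc_A.simps(2) [simp del]

lemma sum_acc_a: "(\<Sum>i=1..k. acc_a lam i) = acc_A lam k"
  by (induction k) (simp_all add: acc_A_Suc_eq)

lemma acc_a_Suc_pos:
  assumes "0 < lam (Suc k)" "0 \<le> acc_A lam k"
  shows "0 < acc_a lam (Suc k)"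
proof -
  have "0 \<le> sqrt ((lam (Suc k))\<^sup>2 + 4 * lam (Suc k) * acc_A lam k)"
    using assms by simp
  with assms show ?thesis unfolding acc_a_Suc by (intro divide_pos_pos add_pos_nonneg) auto
qed

lemma acc_a_Suc_sq:
  assumes "0 \<le> lam (Suc k)" "0 \<le> acc_A lam k"
  shows "(acc_a lam (Suc k))\<^sup>2 = lam (Suc k) * acc_A lam (Suc k)"
proof -
  have "(sqrt ((lam (Suc k))\<^sup>2 + 4 * lam (Suc k) * acc_A lam k))\<^sup>2
      = (lam (Suc k))\<^sup>2 + 4 * lam (Suc k) * acc_A lam k"
    using assms by simp
  then show ?thesis
    by (simp add: acc_A.simps(2) acc_a_Suc power2_eq_square field_simps)
qed

lemma acc_A_nonneg:
  assumes "\<forall>i\<in>{1..k}. 0 < lam i"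
  shows "0 \<le> acc_A lam k"
  using assms
proof (induction k)
  case (Suc k)
  then show ?case
    using acc_a_Suc_pos[of lam k] by (simp add: acc_A_Suc_eq)
qed simp

lemma acc_a_pos:
  assumes "\<forall>i\<in>{1..k}. 0 < lam i" and "i \<in> {1..k}"
  shows "0 < acc_a lam i"
proof -
  obtain j where "i = Suc j" using assms(2) by (cases i) auto
  with assms show ?thesis
    using acc_a_Suc_pos[of lam j] acc_A_nonneg[of j lam] by simp
qed

lemma acc_A_mono:
  assumes "\<forall>i\<in>{1..k}. 0 < lam i" and "j \<le> k"
  shows "acc_A lam j \<le> acc_A lam k"
  using assms
proof (induction k)
  case (Suc k)
  show ?case
  proof (cases "j = Suc k")
    case False
    with Suc show ?thesis
      using acc_a_pos[of "Suc k" lam "Suc k"] by (simp add: acc_A_Suc_eq)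
  qed simp
qed simp

lemma acc_A_pos:
  assumes "\<forall>i\<in>{1..k}. 0 < lam i" and "1 \<le> k"
  shows "0 < acc_A lam k"
  using acc_a_pos[OF assms(1), of 1] acc_A_mono[OF assms] acc_A_Suc_eq[of lam 0] assms(2)
  by simp

lemma acc_a_le_acc_A:
  assumes "\<forall>i\<in>{1..k}. 0 < lam i" and "i \<in> {1..k}"
  shows "acc_a lam i \<le> acc_A lam k"
proof -
  obtain j where j: "i = Suc j" using assms(2) by (cases i) auto
  have "acc_a lam i \<le> acc_A lam i"
    using j acc_A_Suc_eq[of lam j] acc_A_nonneg[of j lam] assms by simp
  also have "\<dots> \<le> acc_A lam k"
    using acc_A_mono[OF assms(1)] assms(2) by simp
  finally show ?thesis .
qed

lemma acc_err_le_max: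
  assumes pos: "\<forall>i\<in>{1..K}. 0 < lam i" and k: "k \<le> K" and "0 \<le> \<delta>" "\<sigma> < 1"
    and M: "0 \<le> M" "\<forall>i\<in>{1..K}. norm (x i - xs) \<le> M"
  shows "acc_err \<sigma> \<delta> lam x xs k \<le> \<delta> * acc_A lam K * M + (\<delta> * acc_A lam K)\<^sup>2 / (2 * (1 - \<sigma>))"
proof -
  have pos_k: "\<forall>i\<in>{1..k}. 0 < lam i" using pos k by auto
  have "(\<Sum>i=1..k. acc_a lam i * norm (x i - xs)) \<le> (\<Sum>i=1..k. acc_a lam i * M)"
    using k M acc_a_pos[OF pos_k] by (intro sum_mono mult_left_mono) (auto intro: less_imp_le)
  also have "\<dots> = acc_A lam k * M"
    by (simp only: sum_acc_a flip: sum_distrib_right)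
  also have "\<dots> \<le> acc_A lam K * M"
    using acc_A_mono[OF pos k] M by (intro mult_right_mono)
  finally have lin: "(\<Sum>i=1..k. acc_a lam i * norm (x i - xs)) \<le> acc_A lam K * M" .
  have "(\<Sum>i=1..k. (acc_a lam i)\<^sup>2) \<le> (\<Sum>i=1..k. acc_a lam i * acc_A lam K)"
    unfolding power2_eq_square using k acc_a_pos[OF pos_k] acc_a_le_acc_A[OF pos]
    by (intro sum_mono mult_left_mono) (auto intro: less_imp_le)
  also have "\<dots> = acc_A lam k * acc_A lam K"
    by (simp only: sum_acc_a flip: sum_distrib_right)
  also have "\<dots> \<le> (acc_A lam K)\<^sup>2"
    unfolding power2_eq_square using acc_A_mono[OF pos k] acc_A_nonneg[OF pos]
    by (intro mult_right_mono)
  finally have quad: "(\<Sum>i=1..k. (acc_a lam i)\<^sup>2) \<le> (acc_A lam K)\<^sup>2" .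
  show ?thesis
    unfolding acc_err_def
    using mult_left_mono[OF lin \<open>0 \<le> \<delta>\<close>] mult_left_mono[OF quad, of "\<delta>\<^sup>2 / (2 * (1 - \<sigma>))"] \<open>\<sigma> < 1\<close>
    by (simp add: power_mult_distrib mult.assoc)
qed

lemma quadratic_bound_imp_le:
  fixes M c r :: real
  assumes "0 \<le> c" "0 \<le> r" and quad: "M\<^sup>2 \<le> (1 + c\<^sup>2) * r\<^sup>2 + 2 * c * r * M"
  shows "M \<le> (1 + 5/2 * c) * r"
proof (rule ccontr)
  define t where "t = (1 + 5/2 * c) * r"
  assume "\<not> M \<le> t"
  then have "t < M" by simp
  moreover have "0 \<le> t" "0 \<le> t - 2 * c * r"
    using assms unfolding t_def by (simp_all add: algebra_simps)
  ultimately have "t * (t - 2 * c * r) < M * (M - 2 * c * r)"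
    by (intro mult_strict_mono) auto
  moreover have "(1 + c\<^sup>2) * r\<^sup>2 \<le> t * (t - 2 * c * r)"
  proof -
    have "t * (t - 2 * c * r) = (1 + 3 * c + 5/4 * c\<^sup>2) * r\<^sup>2"
      unfolding t_def by (simp add: power2_eq_square field_simps)
    moreover have "1 + c\<^sup>2 \<le> 1 + 3 * c + 5/4 * c\<^sup>2"
      using assms(1) zero_le_power2[of c] by linarith
    ultimately show ?thesis
      by (simp add: mult_right_mono)
  qed
  ultimately show False
    using quad by (simp add: power2_eq_square algebra_simps)
qed

definition acc_residual ::
  "real \<Rightarrow> (nat \<Rightarrow> real) \<Rightarrow> (nat \<Rightarrow> 'a::real_normed_vector) \<Rightarrow> (nat \<Rightarrow> 'a) \<Rightarrow> nat \<Rightarrow> real"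
where
  "acc_residual \<sigma> lam x y k =
     (\<Sum>i=1..k. (1 - \<sigma>) * acc_A lam i / (2 * lam i) * (norm (y i - acc_xt lam x y (i - 1)))\<^sup>2)"

locale inexact_accel =
  fixes g :: "'a::real_inner \<Rightarrow> real" and gradg :: "'a \<Rightarrow> 'a"
    and \<sigma> \<delta> :: real and K :: nat and lam :: "nat \<Rightarrow> real" and x y :: "nat \<Rightarrow> 'a"
  assumes conv: "convex_on UNIV g"
    and grad: "\<And>z. (g has_derivative (\<lambda>h. gradg z \<bullet> h)) (at z)"
    and sigma: "0 \<le> \<sigma>" "\<sigma> < 1" and delta: "0 \<le> \<delta>"
    and frame: "accel_framework gradg \<sigma> \<delta> K lam x y"
begin

lemma lam_pos: "\<forall>i\<in>{1..K}. 0 < lam i"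
  using frame by (simp add: accel_framework_def)

lemma acc_residual_nonneg:
  assumes "k \<le> K"
  shows "0 \<le> acc_residual \<sigma> lam x y k"
  unfolding acc_residual_def
proof (rule sum_nonneg)
  fix i assume "i \<in> {1..k}"
  with assms have "0 \<le> acc_A lam i" "0 < lam i"
    using lam_pos acc_A_nonneg[of i lam] by auto
  with sigma show "0 \<le> (1 - \<sigma>) * acc_A lam i / (2 * lam i) * (norm (y i - acc_xt lam x y (i - 1)))\<^sup>2"
    by simp
qed

lemma potential_le:
  assumes "k \<le> K"
  shows "acc_A lam k * (g (y k) - g xs) + 1/2 * (norm (x k - xs))\<^sup>2 + acc_residual \<sigma> lam x y k
    \<le> 1/2 * (norm xs)\<^sup>2 + acc_err \<sigma> \<delta> lam x xs k"
  using assms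
proof (induction k)
  case 0
  have "x 0 = 0" using frame by (simp add: accel_framework_def)
  then show ?case by (simp add: acc_residual_def acc_err_def)
next
  case (Suc k)
  define A a l v xt where "A = acc_A lam k" and "a = acc_a lam (Suc k)" and "l = lam (Suc k)"
    and "v = gradg (y (Suc k))" and "xt = acc_xt lam x y k"
  have pos: "\<forall>i\<in>{1..Suc k}. 0 < lam i"
    using lam_pos Suc.prems by auto
  have A: "0 \<le> A" and l: "0 < l"
    using pos acc_A_nonneg[of k lam] unfolding A_def l_def by auto
  have a: "0 < a" "a\<^sup>2 = l * (A + a)"
    using acc_a_Suc_pos[of lam k] acc_a_Suc_sq[of lam k] A l
    unfolding A_def a_def l_def by (auto simp: acc_A_Suc_eq)
  have xt: "xt = (A / (A + a)) *\<^sub>R y k + (a / (A + a)) *\<^sub>R x k"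
    unfolding xt_def acc_xt_def A_def a_def acc_A_Suc_eq ..
  have err: "norm (l *\<^sub>R v + y (Suc k) - xt) \<le> \<sigma> * norm (y (Suc k) - xt) + l * \<delta>"
    "norm (x (Suc k) - (x k - a *\<^sub>R v)) \<le> a * \<delta>"
    using frame Suc.prems unfolding accel_framework_def l_def v_def xt_def a_def by auto
  have step: "(A + a) * (g (y (Suc k)) - g xs) + 1/2 * (norm (x (Suc k) - xs))\<^sup>2
      + (1 - \<sigma>) * (A + a) / (2 * l) * (norm (y (Suc k) - xt))\<^sup>2
    \<le> A * (g (y k) - g xs) + 1/2 * (norm (x k - xs))\<^sup>2
      + \<delta> * (a * norm (x (Suc k) - xs)) + \<delta>\<^sup>2 / (2 * (1 - \<sigma>)) * a\<^sup>2"
    using accel_step_estimate[OF A l a sigma xt _ _ err]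
      convex_on_imp_above_tangent_inner[OF conv grad] unfolding v_def by blast
  have "acc_residual \<sigma> lam x y (Suc k)
      = acc_residual \<sigma> lam x y k + (1 - \<sigma>) * (A + a) / (2 * l) * (norm (y (Suc k) - xt))\<^sup>2"
    unfolding acc_residual_def A_def a_def l_def xt_def by (simp add: acc_A_Suc_eq)
  moreover have "acc_err \<sigma> \<delta> lam x xs (Suc k)
      = acc_err \<sigma> \<delta> lam x xs k + \<delta> * (a * norm (x (Suc k) - xs)) + \<delta>\<^sup>2 / (2 * (1 - \<sigma>)) * a\<^sup>2"
    unfolding acc_err_def a_def by (simp add: distrib_left)
  ultimately show ?case
    using Suc step unfolding A_def a_def acc_A_Suc_eq by simp
qed

lemma acc_err_le_scaled:
  assumes "k \<le> K" and "0 \<le> c" and small: "\<delta> * acc_A lam K \<le> c * sqrt (1 - \<sigma>) * norm xs"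
    and M: "0 \<le> M" "\<forall>i\<in>{1..K}. norm (x i - xs) \<le> M"
  shows "acc_err \<sigma> \<delta> lam x xs k \<le> c * norm xs * M + c\<^sup>2 * (norm xs)\<^sup>2 / 2"
proof -
  define B where "B = \<delta> * acc_A lam K"
  have "0 \<le> B" unfolding B_def using delta acc_A_nonneg[OF lam_pos] by simp
  have "c * sqrt (1 - \<sigma>) * norm xs \<le> c * 1 * norm xs"
    using sigma \<open>0 \<le> c\<close> by (intro mult_right_mono mult_left_mono) auto
  with small have "B \<le> c * norm xs"
    unfolding B_def by simp
  then have lin: "B * M \<le> c * norm xs * M"
    using M(1) by (rule mult_right_mono)
  have "B\<^sup>2 \<le> (c * sqrt (1 - \<sigma>) * norm xs)\<^sup>2"
    using small \<open>0 \<le> B\<close> unfolding B_def by (intro power_mono)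
  also have "\<dots> = c\<^sup>2 * (1 - \<sigma>) * (norm xs)\<^sup>2"
    using sigma by (simp add: power_mult_distrib)
  finally have "B\<^sup>2 / (2 * (1 - \<sigma>)) \<le> c\<^sup>2 * (norm xs)\<^sup>2 / 2"
    using sigma by (simp add: field_simps)
  with lin show ?thesis
    using acc_err_le_max[OF lam_pos \<open>k \<le> K\<close> delta sigma(2) M] unfolding B_def by linarith
qed

lemma dist_iterates_le:
  assumes xs_min: "\<And>z. g xs \<le> g z" and "1 \<le> K" "0 \<le> c"
    and small: "\<delta> * acc_A lam K \<le> c * sqrt (1 - \<sigma>) * norm xs"
    and "i \<in> {1..K}"
  shows "norm (x i - xs) \<le> (1 + 5/2 * c) * norm xs"
proof -
  define M where "M = Max ((\<lambda>i. norm (x i - xs)) ` {1..K})"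
  \<comment> \<open>The error is linear in \<open>M\<close>, so the potential bound at an iterate attaining \<open>M\<close>
    is a quadratic inequality for \<open>M\<close>.\<close>
  have M_ge: "\<forall>i\<in>{1..K}. norm (x i - xs) \<le> M"
    unfolding M_def by simp
  have "M \<in> (\<lambda>i. norm (x i - xs)) ` {1..K}"
    unfolding M_def using \<open>1 \<le> K\<close> by (intro Max_in) auto
  then obtain i0 where i0: "i0 \<in> {1..K}" "M = norm (x i0 - xs)"
    by blast
  then have "0 \<le> M" by simp
  have "0 \<le> acc_A lam i0 * (g (y i0) - g xs)"
    using acc_A_nonneg[of i0 lam] lam_pos i0(1) xs_min[of "y i0"] by simp
  then have "M\<^sup>2 \<le> (norm xs)\<^sup>2 + 2 * acc_err \<sigma> \<delta> lam x xs i0"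
    using potential_le[of i0 xs] acc_residual_nonneg[of i0] i0 by simp
  also have "\<dots> \<le> (norm xs)\<^sup>2 + 2 * (c * norm xs * M + c\<^sup>2 * (norm xs)\<^sup>2 / 2)"
    using acc_err_le_scaled[of i0 c xs M] i0(1) \<open>0 \<le> c\<close> small \<open>0 \<le> M\<close> M_ge by simp
  finally have "M\<^sup>2 \<le> (1 + c\<^sup>2) * (norm xs)\<^sup>2 + 2 * c * norm xs * M"
    by (simp add: algebra_simps)
  then have "M \<le> (1 + 5/2 * c) * norm xs"
    using quadratic_bound_imp_le \<open>0 \<le> c\<close> norm_ge_zero by blast
  with M_ge \<open>i \<in> {1..K}\<close> show ?thesis by (meson order_trans)
qed

lemma acc_err_bound:
  assumes xs_min: "\<And>z. g xs \<le> g z" and "1 \<le> K" "0 \<le> c"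
    and small: "\<delta> * acc_A lam K \<le> c * sqrt (1 - \<sigma>) * norm xs"
    and "k \<in> {1..K}"
  shows "acc_err \<sigma> \<delta> lam x xs k \<le> c * (1 + 3 * c) * (norm xs)\<^sup>2"
proof -
  have "acc_err \<sigma> \<delta> lam x xs k
      \<le> c * norm xs * ((1 + 5/2 * c) * norm xs) + c\<^sup>2 * (norm xs)\<^sup>2 / 2"
    using assms dist_iterates_le[OF xs_min \<open>1 \<le> K\<close> \<open>0 \<le> c\<close> small]
    by (intro acc_err_le_scaled) auto
  also have "\<dots> = c * (1 + 3 * c) * (norm xs)\<^sup>2"
    by (simp add: power2_eq_square algebra_simps)
  finally show ?thesis .
qed

lemma potential_le_norm_sq:
  assumes xs_min: "\<And>z. g xs \<le> g z" and "1 \<le> K" "0 \<le> c" "c \<le> 1/4"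
    and small: "\<delta> * acc_A lam K \<le> c * sqrt (1 - \<sigma>) * norm xs"
    and k: "k \<in> {1..K}"
  shows "acc_A lam k * (g (y k) - g xs) + 1/2 * (norm (x k - xs))\<^sup>2 + acc_residual \<sigma> lam x y k
    \<le> (norm xs)\<^sup>2"
proof -
  have "c * (1 + 3 * c) \<le> 1/2"
    using \<open>0 \<le> c\<close> \<open>c \<le> 1/4\<close> mult_mono[of c "1/4" "1 + 3 * c" "7/4"] by simp
  then have "c * (1 + 3 * c) * (norm xs)\<^sup>2 \<le> 1/2 * (norm xs)\<^sup>2"
    by (rule mult_right_mono) simp
  then have "acc_err \<sigma> \<delta> lam x xs k \<le> 1/2 * (norm xs)\<^sup>2"
    using acc_err_bound[OF assms(1-3) small k] by linarith
  then show ?thesis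
    using potential_le[of k xs] k by simp
qed

lemma dist_iterate_le_twice_norm:
  assumes xs_min: "\<And>z. g xs \<le> g z" and "1 \<le> K" "0 \<le> c" "c \<le> 1/4"
    and small: "\<delta> * acc_A lam K \<le> c * sqrt (1 - \<sigma>) * norm xs"
    and k: "k \<in> {1..K}"
  shows "norm (x k - xs) \<le> 2 * norm xs"
proof -
  have "0 \<le> acc_A lam k * (g (y k) - g xs)"
    using acc_A_nonneg[of k lam] lam_pos k xs_min[of "y k"] by simp
  then have "(norm (x k - xs))\<^sup>2 \<le> 2 * (norm xs)\<^sup>2"
    using potential_le_norm_sq[OF assms] acc_residual_nonneg[of k] k by simp
  also have "\<dots> \<le> (2 * norm xs)\<^sup>2"
    by (simp add: power_mult_distrib)
  finally show ?thesis
    by (rule power2_le_imp_le) simp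
qed

lemma suboptimal_or_acc_A_le:
  assumes xs_min: "\<And>z. g xs \<le> g z" and "1 \<le> K" "0 \<le> c" "c \<le> 1/4"
    and small: "\<delta> * acc_A lam K \<le> c * sqrt (1 - \<sigma>) * norm xs"
    and k: "k \<in> {1..K}" and "0 < \<epsilon>"
  shows "g (y k) \<le> g xs + \<epsilon> \<or> acc_A lam k \<le> (norm xs)\<^sup>2 / \<epsilon>"
proof (cases "g (y k) \<le> g xs + \<epsilon>")
  case False
  then have "acc_A lam k * \<epsilon> \<le> acc_A lam k * (g (y k) - g xs)"
    using acc_A_nonneg[of k lam] lam_pos k by (intro mult_left_mono) auto
  also have "\<dots> \<le> (norm xs)\<^sup>2"
  proof -
    have "k \<le> K" using k by simp
    from potential_le_norm_sq[OF assms(1-6)] acc_residual_nonneg[OF this]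
    show ?thesis using zero_le_power2[of "norm (x k - xs)"] by linarith
  qed
  finally show ?thesis
    using \<open>0 < \<epsilon>\<close> by (simp add: pos_le_divide_eq)
qed simp

end

theorem mainTheorem12:
  fixes g :: "'a::euclidean_space \<Rightarrow> real" and gradg :: "'a \<Rightarrow> 'a"
    and \<sigma> \<delta> :: real and K :: nat
    and lam :: "nat \<Rightarrow> real" and x y :: "nat \<Rightarrow> 'a" and xs :: 'a
  assumes conv: "convex_on UNIV g"
    and grad: "\<And>z. (g has_derivative (\<lambda>h. gradg z \<bullet> h)) (at z)"
    and sigma: "0 < \<sigma>" "\<sigma> < 1"
    and delta: "0 \<le> \<delta>"
    and K: "1 \<le> K"
    and frame: "accel_framework gradg \<sigma> \<delta> K lam x y"
    and xs_min: "\<And>z. g xs \<le> g z"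
  shows
    "(\<forall>c\<ge>0. \<delta> \<le> c * sqrt (1 - \<sigma>) * norm xs / acc_A lam K \<longrightarrow>
        (\<forall>k\<in>{1..K}. acc_err \<sigma> \<delta> lam x xs k \<le> c * (1 + 3 * c) * (norm xs)\<^sup>2)
      \<and> (c \<le> 1/4 \<longrightarrow>
          (\<forall>k\<in>{1..K}.
             acc_A lam k * (g (y k) - g xs) + 1/2 * (norm (x k - xs))\<^sup>2
             + (\<Sum>i=1..k. (1 - \<sigma>) * acc_A lam i / (2 * lam i)
                            * (norm (y i - acc_xt lam x y (i - 1)))\<^sup>2)
             \<le> (norm xs)\<^sup>2)))
    \<and> (\<delta> \<le> norm xs / ((4 * sqrt 2 / sqrt (1 - \<sigma>)) * acc_A lam K) \<longrightarrow>
        (\<forall>k\<in>{1..K}. norm (x k - xs) \<le> 2 * norm xs)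
      \<and> (\<forall>\<epsilon>>0. \<forall>k\<in>{1..K}. g (y k) \<le> g xs + \<epsilon> \<or> acc_A lam k \<le> (norm xs)\<^sup>2 / \<epsilon>))"
proof -
  interpret inexact_accel g gradg \<sigma> \<delta> K lam x y
    using conv grad sigma delta frame by unfold_locales auto
  have small_iff: "\<delta> \<le> c * sqrt (1 - \<sigma>) * norm xs / acc_A lam K
      \<longleftrightarrow> \<delta> * acc_A lam K \<le> c * sqrt (1 - \<sigma>) * norm xs" for c
    using acc_A_pos[OF lam_pos K] by (simp add: pos_le_divide_eq)
  define c\<^sub>0 where "c\<^sub>0 = 1 / (4 * sqrt 2)"
  have c\<^sub>0: "0 \<le> c\<^sub>0" "c\<^sub>0 \<le> 1/4"
    unfolding c\<^sub>0_def by (simp_all add: field_simps)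
  have mu_eq: "norm xs / ((4 * sqrt 2 / sqrt (1 - \<sigma>)) * acc_A lam K)
      = c\<^sub>0 * sqrt (1 - \<sigma>) * norm xs / acc_A lam K"
    unfolding c\<^sub>0_def using sigma by (simp add: field_simps)
  show ?thesis
    unfolding mu_eq acc_residual_def[symmetric] small_iff
    using acc_err_bound[OF xs_min K] potential_le_norm_sq[OF xs_min K]
      dist_iterate_le_twice_norm[OF xs_min K c\<^sub>0] suboptimal_or_acc_A_le[OF xs_min K c\<^sub>0]
    by blast
qed

end
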